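(* Let $n\geq 2$ and let $X$ be any finite subset of $\mathbb{R}^n$. Then there is a polynomial function $P:\mathbb{R}^n\rightarrow \mathbb{R}$ which has a local minimum at every point of $X$ and has no critical points other than the points of $X$. *)

theory Defs
  imports "HOL-Analysis.Analysis"
begin

inductive real_poly_fun :: "(real ^ 'n \<Rightarrow> real) \<Rightarrow> bool" where
  const: "real_poly_fun (\<lambda>x. c)"
| coord: "real_poly_fun (\<lambda>x. x $ i)"
| add: "real_poly_fun p \<Longrightarrow> real_poly_fun q \<Longrightarrow> real_poly_fun (\<lambda>x. p x + q x)"
| mult: "real_poly_fun p \<Longrightarrow> real_poly_fun q \<Longrightarrow> real_poly_fun (\<lambda>x. p x * q x)"

definition local_min_at :: "('a::metric_space \<Rightarrow> real) \<Rightarrow> 'a \<Rightarrow> bool" where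
  "local_min_at f x \<longleftrightarrow> (\<exists>e>0. \<forall>y. dist y x < e \<longrightarrow> f x \<le> f y)"

definition critical_point :: "('a::real_normed_vector \<Rightarrow> real) \<Rightarrow> 'a \<Rightarrow> bool" where
  "critical_point f x \<longleftrightarrow> (f has_derivative (\<lambda>h. 0)) (at x)"

end

theory Submission
  imports Defs "HOL-Computational_Algebra.Polynomial"
begin

text \<open>Choose a linear form \<open>u = c \<bullet> x\<close> with \<open>c\<^sub>i\<^sub>1 = 1\<close> that is injective on \<open>X\<close>, and a
  second coordinate \<open>i\<^sub>2 \<noteq> i\<^sub>1\<close>. Let \<open>q\<close> have exactly the simple roots \<open>u(X)\<close> and let
  \<open>s\<close>, \<open>r\<^sub>j\<close> interpolate the remaining coordinates of the points of \<open>X\<close> as functions of \<open>u\<close>.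
  The sum of squares
  \<open>P = q(u)\<^sup>2 + (q'(u)\<^sup>2 x\<^sub>i\<^sub>2 - s(u))\<^sup>2 + (\<Sum>j \<noteq> i\<^sub>1, i\<^sub>2. (x\<^sub>j - r\<^sub>j(u))\<^sup>2)\<close>
  vanishes exactly on \<open>X\<close>, so it has a minimum at every point of \<open>X\<close>. At a critical point the
  derivatives along directions fixing \<open>u\<close> force \<open>x\<^sub>j = r\<^sub>j(u)\<close> and
  \<open>q'(u)\<^sup>2 (q'(u)\<^sup>2 x\<^sub>i\<^sub>2 - s(u)) = 0\<close>; the derivative along \<open>e\<^sub>i\<^sub>1\<close> then gives
  \<open>q(u) q'(u) = 0\<close> if \<open>q'(u) \<noteq> 0\<close>, and \<open>s(u) s'(u) = 0\<close> if \<open>q'(u) = 0\<close>. The second case is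
  excluded by a generic choice of \<open>s\<close>, so every critical point is a zero of \<open>P\<close>. The weight
  \<open>q'(u)\<^sup>2\<close> on the second coordinate is what removes the critical points over the roots of
  \<open>q'\<close>; this is where \<open>n \<ge> 2\<close> is needed.\<close>

section \<open>Polynomial functions and critical points\<close>

lemma real_poly_fun_diff:
  "real_poly_fun p \<Longrightarrow> real_poly_fun q \<Longrightarrow> real_poly_fun (\<lambda>x. p x - q x)"
  using real_poly_fun.add[OF _ real_poly_fun.mult[OF real_poly_fun.const[of "-1"]]] by fastforce

lemma real_poly_fun_sum:
  "finite S \<Longrightarrow> (\<And>i. i \<in> S \<Longrightarrow> real_poly_fun (f i)) \<Longrightarrow> real_poly_fun (\<lambda>x. \<Sum>i\<in>S. f i x)"
  by (induction S rule: finite_induct) (auto intro: real_poly_fun.intros)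

lemma real_poly_fun_power2: "real_poly_fun p \<Longrightarrow> real_poly_fun (\<lambda>x. (p x)\<^sup>2)"
  by (simp add: power2_eq_square real_poly_fun.mult)

lemma real_poly_fun_poly_comp: "real_poly_fun g \<Longrightarrow> real_poly_fun (\<lambda>x. poly p (g x))"
  by (induction p) (auto intro: real_poly_fun.intros)

lemma real_poly_fun_inner: "real_poly_fun (\<lambda>x. c \<bullet> x)"
  unfolding inner_vec_def by (auto intro!: real_poly_fun_sum real_poly_fun.intros)

lemma critical_point_imp_derivative_eq_0:
  assumes "critical_point f x" and "(f has_derivative f') (at x)"
  shows "f' v = 0"
  using has_derivative_unique[OF assms(2) assms(1)[unfolded critical_point_def]] by simp

lemma not_critical_point_coordinate: "\<not> critical_point (\<lambda>x::real^'n. x $ i) x"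
proof
  assume "critical_point (\<lambda>x::real^'n. x $ i) x"
  moreover have "((\<lambda>x::real^'n. x $ i) has_derivative (\<lambda>v. v $ i)) (at x)"
    by (intro bounded_linear_imp_has_derivative bounded_linear_vec_nth)
  ultimately have "(axis i 1 :: real^'n) $ i = 0"
    by (rule critical_point_imp_derivative_eq_0)
  then show False by simp
qed

lemma local_min_at_zero_of_nonneg:
  assumes "\<And>y. f y \<ge> 0" and "f x = 0"
  shows "local_min_at f x"
  unfolding local_min_at_def using assms by (intro exI[of _ 1]) auto

lemma has_derivative_poly_comp:
  fixes p :: "real poly"
  assumes "(g has_derivative g') (at x)"
  shows "((\<lambda>x. poly p (g x)) has_derivative (\<lambda>v. poly (pderiv p) (g x) * g' v)) (at x)"
  using has_derivative_compose[OF assms has_field_derivative_imp_has_derivative[OF poly_DERIV]]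
  by simp

section \<open>Univariate polynomials\<close>

lemma poly_linear_factors_eq_0_iff:
  fixes A :: "'a::idom set"
  assumes "finite A"
  shows "poly (\<Prod>a\<in>A. [:-a, 1:]) t = 0 \<longleftrightarrow> t \<in> A"
  using assms by (simp add: poly_prod)

lemma poly_pderiv_linear_factors_neq_0:
  fixes A :: "'a::idom set"
  assumes "finite A" and "t \<in> A"
  shows "poly (pderiv (\<Prod>a\<in>A. [:-a, 1:])) t \<noteq> 0"
proof -
  have "poly (pderiv (\<Prod>a\<in>A. [:-a, 1:])) t = (\<Sum>a\<in>A. \<Prod>b\<in>A - {a}. t - b)"
    by (simp add: pderiv_prod poly_sum poly_prod pderiv_pCons)
  also have "\<dots> = (\<Prod>b\<in>A - {t}. t - b)"
    using assms by (subst sum.remove[of A t]) (auto intro!: sum.neutral)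
  also have "\<dots> \<noteq> 0"
    using assms by simp
  finally show ?thesis .
qed

lemma poly_interpolation:
  fixes A :: "'a::field set"
  assumes "finite A"
  shows "\<exists>p. \<forall>a\<in>A. poly p a = f a"
  using assms
proof (induction A rule: finite_induct)
  case empty
  then show ?case by simp
next
  case (insert a A)
  then obtain p where p: "\<forall>b\<in>A. poly p b = f b" by blast
  define w where "w = (\<Prod>b\<in>A. [:-b, 1:])"
  have "poly w a \<noteq> 0" and "\<forall>b\<in>A. poly w b = 0"
    using insert by (simp_all add: w_def poly_linear_factors_eq_0_iff)
  then have "\<forall>b\<in>insert a A. poly (p + smult ((f a - poly p a) / poly w a) w) b = f b"
    using p by auto
  then show ?case by blast
qed

lemma poly_interpolation_inj_on:
  fixes g :: "'b \<Rightarrow> 'a::field"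
  assumes "finite X" and "inj_on g X"
  shows "\<exists>p. \<forall>x\<in>X. poly p (g x) = f x"
proof -
  obtain p where "\<forall>a\<in>g ` X. poly p a = f (inv_into X g a)"
    using poly_interpolation[of "g ` X" "\<lambda>a. f (inv_into X g a)"] assms(1) by blast
  then show ?thesis
    using assms(2) by auto
qed

lemma exists_poly_simple_roots:
  fixes A :: "'a::{idom, ring_char_0} set"
  assumes "finite A" and "A \<noteq> {}"
  obtains q where "\<And>t. poly q t = 0 \<longleftrightarrow> t \<in> A"
    and "\<And>t. poly q t = 0 \<Longrightarrow> poly (pderiv q) t \<noteq> 0" and "pderiv q \<noteq> 0"
proof
  let ?q = "\<Prod>a\<in>A. [:-a, 1:]"
  show roots: "poly ?q t = 0 \<longleftrightarrow> t \<in> A" for t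
    using assms(1) by (rule poly_linear_factors_eq_0_iff)
  show simple: "poly ?q t = 0 \<Longrightarrow> poly (pderiv ?q) t \<noteq> 0" for t
    using assms(1) roots by (simp add: poly_pderiv_linear_factors_neq_0)
  show "pderiv ?q \<noteq> 0"
    using assms(2) roots simple by force
qed

text \<open>The factor \<open>t - d\<close> makes the perturbation move both the value and the slope at the
  roots \<open>z\<close> of \<open>q'\<close>: \<open>(q (t - d))'(z) = q(z) \<noteq> 0\<close>.\<close>
lemma exists_poly_perturbation_nonzero_at_pderiv_roots:
  fixes q s0 :: "real poly"
  assumes "pderiv q \<noteq> 0" and "\<And>t. poly (pderiv q) t = 0 \<Longrightarrow> poly q t \<noteq> 0"
  obtains s where "\<And>t. poly q t = 0 \<Longrightarrow> poly s t = poly s0 t"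
    and "\<And>t. poly (pderiv q) t = 0 \<Longrightarrow> poly s t \<noteq> 0 \<and> poly (pderiv s) t \<noteq> 0"
proof -
  define Z where "Z = {z. poly (pderiv q) z = 0}"
  have "finite Z"
    unfolding Z_def using assms(1) by (rule poly_roots_finite)
  then obtain d where "d \<notin> Z"
    using ex_new_if_finite[OF infinite_UNIV_char_0] by blast
  define g where "g = q * [:-d, 1:]"
  have g: "poly g z \<noteq> 0" "poly (pderiv g) z = poly q z" if "z \<in> Z" for z
    using that \<open>d \<notin> Z\<close> assms(2) unfolding g_def pderiv_mult
    by (auto simp: Z_def pderiv_pCons)
  have affine_roots: "{l::real. a + l * b = 0} = {- a / b}" if "b \<noteq> 0" for a b
    using that by (auto simp: field_simps)
  define B where "B = (\<Union>z\<in>Z. {l. poly s0 z + l * poly g z = 0} \<union>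
                              {l. poly (pderiv s0) z + l * poly q z = 0})"
  have "finite B"
    using \<open>finite Z\<close> g assms(2) by (simp add: B_def Z_def affine_roots)
  then obtain l where "l \<notin> B"
    using ex_new_if_finite[OF infinite_UNIV_char_0] by blast
  show thesis
  proof
    show "poly (s0 + smult l g) t = poly s0 t" if "poly q t = 0" for t
      using that by (simp add: g_def)
    show "poly (s0 + smult l g) t \<noteq> 0 \<and> poly (pderiv (s0 + smult l g)) t \<noteq> 0"
      if "poly (pderiv q) t = 0" for t
      using that \<open>l \<notin> B\<close> g[of t] by (simp add: B_def Z_def pderiv_add pderiv_smult mult.commute)
  qed
qed

section \<open>Linear forms separating a finite set\<close>

lemma exists_not_orthogonal:
  fixes D :: "'a::euclidean_space set"
  assumes "finite D" and "0 \<notin> D"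
  shows "\<exists>c. c \<noteq> 0 \<and> (\<forall>d\<in>D. c \<bullet> d \<noteq> 0)"
  using assms
proof (induction D rule: finite_induct)
  case empty
  obtain b :: 'a where "b \<in> Basis" using nonempty_Basis by blast
  then show ?case using nonzero_Basis by blast
next
  case (insert d D)
  then obtain c where c: "c \<noteq> 0" "\<forall>d'\<in>D. c \<bullet> d' \<noteq> 0" by auto
  show ?case
  proof (cases "c \<bullet> d = 0")
    case False
    then show ?thesis using c by auto
  next
    case True
    text \<open>Replace \<open>c\<close> by \<open>c + e d\<close> for a step size \<open>e\<close> avoiding finitely many bad values.\<close>
    define B where "B = insert 0 ((\<lambda>d'. - (c \<bullet> d') / (d \<bullet> d')) ` D)"
    obtain e :: real where "e \<notin> B"
      using ex_new_if_finite[OF infinite_UNIV_char_0, of B] insert(1) by (auto simp: B_def)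
    have "(c + e *\<^sub>R d) \<bullet> d' \<noteq> 0" if "d' \<in> insert d D" for d'
    proof
      assume "(c + e *\<^sub>R d) \<bullet> d' = 0"
      then have sum0: "c \<bullet> d' + e * (d \<bullet> d') = 0" by (simp add: inner_add_left)
      show False
      proof (cases "d' = d")
        case True
        then show False using sum0 \<open>c \<bullet> d = 0\<close> \<open>e \<notin> B\<close> insert(4) by (simp add: B_def)
      next
        case False
        then have "d' \<in> D" "c \<bullet> d' \<noteq> 0" using that c(2) by auto
        with sum0 have "e = - (c \<bullet> d') / (d \<bullet> d')"
          by (metis add.right_neutral eq_divide_eq minus_add_cancel mult_zero_right)
        then show False using \<open>d' \<in> D\<close> \<open>e \<notin> B\<close> by (simp add: B_def)
      qed
    qed
    moreover have "c + e *\<^sub>R d \<noteq> 0"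
      using calculation[of d] by auto
    ultimately show ?thesis by blast
  qed
qed

lemma exists_inner_inj_on:
  fixes X :: "'a::euclidean_space set"
  assumes "finite X"
  shows "\<exists>c. c \<noteq> 0 \<and> inj_on (inner c) X"
proof -
  define D where "D = (\<lambda>(p, q). p - q) ` {(p, q) \<in> X \<times> X. p \<noteq> q}"
  have "finite D"
    unfolding D_def using assms by (auto intro: finite_subset[of _ "X \<times> X"])
  moreover have "0 \<notin> D" by (auto simp: D_def)
  ultimately obtain c where c: "c \<noteq> 0" "\<forall>d\<in>D. c \<bullet> d \<noteq> 0"
    using exists_not_orthogonal by blast
  have "inj_on (inner c) X"
  proof (rule inj_onI, rule ccontr)
    fix p q assume "p \<in> X" "q \<in> X" "c \<bullet> p = c \<bullet> q" "p \<noteq> q"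
    then have "p - q \<in> D" "c \<bullet> (p - q) = 0" by (auto simp: D_def inner_diff_right)
    then show False using c(2) by blast
  qed
  then show ?thesis using c(1) by blast
qed

lemma exists_inner_inj_on_normalized:
  fixes X :: "(real^'n) set"
  assumes "finite X"
  obtains c i where "c $ i = 1" and "inj_on (inner c) X"
proof -
  obtain c :: "real^'n" where "c \<noteq> 0" and inj: "inj_on (inner c) X"
    using exists_inner_inj_on[OF assms] by blast
  then obtain i where i: "c $ i \<noteq> 0" by (auto simp: vec_eq_iff)
  have "inj_on (inner ((1 / c $ i) *\<^sub>R c)) X"
    using inj i by (auto simp: inj_on_def)
  moreover have "((1 / c $ i) *\<^sub>R c) $ i = 1" using i by simp
  ultimately show thesis using that by blast
qed

lemma vec_eq_if_inner_eq_and_other_coords_eq: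
  fixes c x y :: "real^'n"
  assumes "c $ i \<noteq> 0" and "c \<bullet> x = c \<bullet> y" and "\<And>k. k \<noteq> i \<Longrightarrow> x $ k = y $ k"
  shows "x = y"
proof -
  have "c \<bullet> (x - y) = (\<Sum>k\<in>UNIV. c $ k * (x - y) $ k)" by (simp add: inner_vec_def)
  also have "\<dots> = c $ i * (x - y) $ i"
    using assms(3) by (subst sum.remove[of UNIV i]) (auto intro!: sum.neutral)
  finally have "(x - y) $ i = 0"
    using assms(1,2) by (simp add: inner_diff_right)
  then show ?thesis
    using assms(3) by (metis vec_eq_iff eq_iff_diff_eq_0 vector_minus_component)
qed

section \<open>The sum of squares\<close>

locale sos_construction =
  fixes X :: "(real^'n) set" and c :: "real^'n" and i1 i2 :: 'n
    and q s :: "real poly" and r :: "'n \<Rightarrow> real poly"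
  assumes c_i1: "c $ i1 = 1" and i2_neq_i1: "i2 \<noteq> i1"
    and q_eq_0_iff: "poly q t = 0 \<longleftrightarrow> t \<in> inner c ` X"
    and q_simple_roots: "poly q t = 0 \<Longrightarrow> poly (pderiv q) t \<noteq> 0"
    and s_on_X: "p \<in> X \<Longrightarrow> poly s (c \<bullet> p) = (poly (pderiv q) (c \<bullet> p))\<^sup>2 * p $ i2"
    and s_at_pderiv_roots: "poly (pderiv q) t = 0 \<Longrightarrow> poly s t \<noteq> 0 \<and> poly (pderiv s) t \<noteq> 0"
    and r_on_X: "p \<in> X \<Longrightarrow> poly (r j) (c \<bullet> p) = p $ j"
begin

definition h :: "real poly" where "h = (pderiv q)\<^sup>2"

definition J :: "'n set" where "J = - {i1, i2}"

definition P :: "real^'n \<Rightarrow> real" where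
  "P x = (poly q (c \<bullet> x))\<^sup>2 + (poly h (c \<bullet> x) * x $ i2 - poly s (c \<bullet> x))\<^sup>2
         + (\<Sum>j\<in>J. (x $ j - poly (r j) (c \<bullet> x))\<^sup>2)"

definition P' :: "real^'n \<Rightarrow> real^'n \<Rightarrow> real" where
  "P' x v = (let u = c \<bullet> x; du = c \<bullet> v in
     2 * poly q u * poly (pderiv q) u * du
     + 2 * (poly h u * x $ i2 - poly s u)
         * (poly (pderiv h) u * du * x $ i2 + poly h u * v $ i2 - poly (pderiv s) u * du)
     + (\<Sum>j\<in>J. 2 * (x $ j - poly (r j) u) * (v $ j - poly (pderiv (r j)) u * du)))"

lemma P_nonneg: "P x \<ge> 0"
  unfolding P_def by (intro add_nonneg_nonneg sum_nonneg) auto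

lemma P_eq_0_iff_terms_eq_0:
  "P x = 0 \<longleftrightarrow> poly q (c \<bullet> x) = 0 \<and> poly h (c \<bullet> x) * x $ i2 = poly s (c \<bullet> x)
                 \<and> (\<forall>j\<in>J. x $ j = poly (r j) (c \<bullet> x))"
  unfolding P_def by (simp add: add_nonneg_eq_0_iff sum_nonneg sum_nonneg_eq_0_iff)

lemma P_eq_0_iff: "P x = 0 \<longleftrightarrow> x \<in> X"
proof
  assume "x \<in> X"
  then show "P x = 0" by (simp add: P_eq_0_iff_terms_eq_0 h_def q_eq_0_iff s_on_X r_on_X)
next
  assume "P x = 0"
  then have q0: "poly q (c \<bullet> x) = 0" and i2: "poly h (c \<bullet> x) * x $ i2 = poly s (c \<bullet> x)"
    and J: "\<And>j. j \<in> J \<Longrightarrow> x $ j = poly (r j) (c \<bullet> x)"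
    by (auto simp: P_eq_0_iff_terms_eq_0)
  then obtain p where p: "p \<in> X" "c \<bullet> x = c \<bullet> p" using q_eq_0_iff by auto
  have "poly h (c \<bullet> p) \<noteq> 0" using q0 p q_simple_roots by (simp add: h_def)
  then have "x $ i2 = p $ i2" using i2 p s_on_X by (simp add: h_def)
  moreover have "x $ j = p $ j" if "j \<in> J" for j using J[OF that] p r_on_X by simp
  ultimately have "x $ k = p $ k" if "k \<noteq> i1" for k
    using that by (cases "k = i2") (auto simp: J_def)
  then have "x = p" using c_i1 p(2) by (intro vec_eq_if_inner_eq_and_other_coords_eq[of c i1]) auto
  then show "x \<in> X" using p(1) by simp
qed

lemma has_derivative_P: "(P has_derivative P' x) (at x)"
proof -
  have inner: "((\<lambda>x. c \<bullet> x) has_derivative (\<lambda>v. c \<bullet> v)) (at x)"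
    by (intro bounded_linear_imp_has_derivative bounded_linear_inner_right)
  have coord: "((\<lambda>x. x $ j) has_derivative (\<lambda>v. v $ j)) (at x)" for j
    by (intro bounded_linear_imp_has_derivative bounded_linear_vec_nth)
  show ?thesis
    unfolding P_def[abs_def]
    by (rule has_derivative_eq_rhs,
        (rule has_derivative_add has_derivative_sum has_derivative_power has_derivative_diff
              has_derivative_mult has_derivative_poly_comp[OF inner] coord)+)
       (simp add: fun_eq_iff P'_def Let_def algebra_simps)
qed

lemma P'_orthogonal:
  assumes "c \<bullet> v = 0"
  shows "P' x v = 2 * (poly h (c \<bullet> x) * x $ i2 - poly s (c \<bullet> x)) * poly h (c \<bullet> x) * v $ i2
                  + (\<Sum>j\<in>J. 2 * (x $ j - poly (r j) (c \<bullet> x)) * v $ j)"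
  using assms by (simp add: P'_def Let_def)

lemma critical_point_P_equations:
  assumes "critical_point P x"
  defines "u \<equiv> c \<bullet> x"
  shows "\<And>j. j \<in> J \<Longrightarrow> x $ j = poly (r j) u"
    and "poly h u * (poly h u * x $ i2 - poly s u) = 0"
    and "poly q u * poly (pderiv q) u
         + (poly h u * x $ i2 - poly s u) * (poly (pderiv h) u * x $ i2 - poly (pderiv s) u) = 0"
proof -
  have P'0: "P' x v = 0" for v
    using assms(1) has_derivative_P by (rule critical_point_imp_derivative_eq_0)
  have i1_i2_notin_J: "i1 \<notin> J" "i2 \<notin> J" by (auto simp: J_def)
  text \<open>The directions \<open>e k\<close> keep \<open>c \<bullet> x\<close> fixed and so isolate single terms of \<open>P'\<close>.\<close>
  define e where "e k = axis k 1 - c $ k *\<^sub>R axis i1 (1::real)" for k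
  have e_orthogonal: "c \<bullet> e k = 0" for k
    using c_i1 by (simp add: e_def inner_diff_right inner_axis)
  have e_nth: "e k $ l = (if l = k then 1 else 0)" if "l \<noteq> i1" for k l
    using that by (simp add: e_def axis_def)
  show xJ: "x $ j = poly (r j) u" if "j \<in> J" for j
  proof -
    have "e j $ i2 = 0" "\<And>l. l \<in> J \<Longrightarrow> e j $ l = (if l = j then 1 else 0)"
      using that i1_i2_notin_J i2_neq_i1 e_nth by (metis, metis)
    then have "P' x (e j) = (\<Sum>l\<in>J. 2 * (x $ l - poly (r l) u) * (if l = j then 1 else 0))"
      by (simp add: P'_orthogonal[OF e_orthogonal] u_def)
    also have "\<dots> = 2 * (x $ j - poly (r j) u)"
      using that by (simp add: if_distrib[where f="\<lambda>t. _ * t"] cong: if_cong)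
    finally show ?thesis using P'0 by simp
  qed
  show "poly h u * (poly h u * x $ i2 - poly s u) = 0"
  proof -
    have "P' x (e i2) = 2 * (poly h u * x $ i2 - poly s u) * poly h u"
      using e_nth[of i2 i2] i2_neq_i1 xJ by (simp add: P'_orthogonal[OF e_orthogonal] u_def)
    then show ?thesis using P'0 by (simp add: mult.commute)
  qed
  show "poly q u * poly (pderiv q) u
        + (poly h u * x $ i2 - poly s u) * (poly (pderiv h) u * x $ i2 - poly (pderiv s) u) = 0"
  proof -
    have "P' x (axis i1 1) = 2 * (poly q u * poly (pderiv q) u
          + (poly h u * x $ i2 - poly s u) * (poly (pderiv h) u * x $ i2 - poly (pderiv s) u))"
    proof -
      have "(\<Sum>l\<in>J. 2 * (x $ l - poly (r l) u) * w l) = 0" for w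
        using xJ by simp
      moreover have "c \<bullet> axis i1 1 = 1" "axis i1 1 $ i2 = (0::real)"
        using c_i1 i2_neq_i1 by (simp add: inner_axis, simp add: axis_def)
      ultimately show ?thesis
        by (simp add: P'_def Let_def u_def distrib_left)
    qed
    then show ?thesis using P'0 by simp
  qed
qed

lemma real_poly_fun_P: "real_poly_fun P"
  unfolding P_def[abs_def]
  by (intro real_poly_fun.add real_poly_fun_power2 real_poly_fun_sum real_poly_fun_diff
      real_poly_fun_poly_comp real_poly_fun_inner real_poly_fun.mult real_poly_fun.coord) auto

lemma critical_point_P_imp_eq_0:
  assumes "critical_point P x"
  shows "P x = 0"
proof -
  define u where "u = c \<bullet> x"
  note eqs = critical_point_P_equations[OF assms, folded u_def]
  show ?thesis
  proof (cases "poly (pderiv q) u = 0")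
    case True
    then have "poly h u = 0" "poly (pderiv h) u = 0"
      by (simp_all add: h_def pderiv_power)
    then have "poly s u * poly (pderiv s) u = 0"
      using eqs(3) True by simp
    then show ?thesis
      using s_at_pderiv_roots[OF True] by simp
  next
    case False
    then have "poly h u * x $ i2 = poly s u"
      using eqs(2) by (simp add: h_def)
    moreover from this have "poly q u = 0"
      using eqs(3) False by simp
    ultimately show ?thesis
      using eqs(1) by (simp add: P_eq_0_iff_terms_eq_0 u_def)
  qed
qed

end

theorem proposition1:
  fixes X :: "(real ^ 'n) set"
  assumes "CARD('n) \<ge> 2"
    and "finite X"
  shows "\<exists>P. real_poly_fun P \<and> (\<forall>x\<in>X. local_min_at P x)
             \<and> (\<forall>x. critical_point P x \<longrightarrow> x \<in> X)"
proof (cases "X = {}")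
  case True
  then show ?thesis
    using real_poly_fun.coord not_critical_point_coordinate by blast
next
  case False
  obtain c i1 where c_i1: "c $ i1 = 1" and inj: "inj_on (inner c) X"
    using exists_inner_inj_on_normalized[OF assms(2)] .
  obtain i2 :: 'n where "i2 \<noteq> i1"
    using assms(1) by (metis (full_types) card_2_iff' ex_card)
  obtain q where q_roots: "\<And>t. poly q t = 0 \<longleftrightarrow> t \<in> inner c ` X"
    and q_simple: "\<And>t. poly q t = 0 \<Longrightarrow> poly (pderiv q) t \<noteq> 0" and "pderiv q \<noteq> 0"
    using exists_poly_simple_roots[of "inner c ` X"] assms(2) False by blast
  have "\<forall>j. \<exists>rj. \<forall>p\<in>X. poly rj (c \<bullet> p) = p $ j"
    by (intro allI poly_interpolation_inj_on[OF assms(2) inj])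
  then obtain r where r: "\<And>j p. p \<in> X \<Longrightarrow> poly (r j) (c \<bullet> p) = p $ j"
    by metis
  obtain s0 where s0: "\<forall>p\<in>X. poly s0 (c \<bullet> p) = (poly (pderiv q) (c \<bullet> p))\<^sup>2 * p $ i2"
    using poly_interpolation_inj_on[OF assms(2) inj, of "\<lambda>p. (poly (pderiv q) (c \<bullet> p))\<^sup>2 * p $ i2"]
    by blast
  obtain s where "\<And>t. poly q t = 0 \<Longrightarrow> poly s t = poly s0 t"
    and "\<And>t. poly (pderiv q) t = 0 \<Longrightarrow> poly s t \<noteq> 0 \<and> poly (pderiv s) t \<noteq> 0"
    using exists_poly_perturbation_nonzero_at_pderiv_roots[OF \<open>pderiv q \<noteq> 0\<close>] q_simple by metis
  then interpret sos_construction X c i1 i2 q s r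
    using c_i1 \<open>i2 \<noteq> i1\<close> q_roots q_simple s0 r by unfold_locales auto
  show ?thesis
    using real_poly_fun_P P_nonneg P_eq_0_iff critical_point_P_imp_eq_0
    by (metis local_min_at_zero_of_nonneg)
qed

end
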